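(* Let $\mathcal{S}$ and $\mathcal{A}$ be finite state and action sets, let $r:\mathcal{S}\times\mathcal{A}\to\mathbb{R}$ be a reward function, let $\pi_{\mathrm{ref}}$ be a reference policy, and let $A^{\pi_{\mathrm{ref}}}$ be its (unregularized) advantage function. Let $\beta>0$, let $\theta\mapsto\pi_\theta$ be a differentiable parameterization of policies with $\pi_\theta(a|s)>0$ for all $s,a,\theta$, fix a state $s\in\mathcal{S}$, and fix a parameter value $\theta_k$. Define $$\mathcal{I}_s(\pi_\theta,\pi_{\mathrm{ref}}) := \mathbb{E}_{a\sim\pi_\theta(\cdot|s)}\left[A^{\pi_{\mathrm{ref}}}(s,a)-\beta\log\frac{\pi_\theta(a|s)}{\pi_{\mathrm{ref}}(a|s)}\right]$$ and the surrogate function $$\mathcal{H}_s^k(\pi_\theta,\pi_{\mathrm{ref}}) := \frac12\,\mathbb{E}_{a\sim\pi_{\theta_k}(\cdot|s)}\left[\left(\frac1\beta A^{\pi_{\mathrm{ref}}}(s,a)-\log\frac{\pi_\theta(a|s)}{\pi_{\mathrm{ref}}(a|s)}\right)^2\right],$$ where in $\mathcal{H}_s^k$ the sampling distribution $\pi_{\theta_k}$ is held fixed while $\theta$ varies. Then, with both gradients evaluated at $\theta=\theta_k$, $$\nabla_\theta \mathcal{I}_s(\pi_{\theta},\pi_{\mathrm{ref}})\big|_{\theta=\theta_k} = -\beta\,\nabla_\theta \mathcal{H}_s^k(\pi_\theta,\pi_{\mathrm{ref}})\big|_{\theta=\theta_k}.$$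
   Context: A deterministic MDP with finite state space $\mathcal{S}$, finite action space $\mathcal{A}$, deterministic transition $f:\mathcal{S}\times\mathcal{A}\to\mathcal{S}$ and reward $r$; episodes terminate after a finite (possibly random) number $T$ of steps at a terminal state. A policy $\pi$ maps each state to a distribution $\pi(\cdot|s)\in\Delta(\mathcal{A})$. The unregularized value is $V^\pi(s)=\mathbb{E}[\sum_{t=0}^{T-1} r(s_t,a_t)\mid s_0=s]$ with $a_t\sim\pi(\cdot|s_t)$, $s_{t+1}=f(s_t,a_t)$; $Q^\pi(s,a)=r(s,a)+V^\pi(f(s,a))$ and $A^\pi(s,a)=Q^\pi(s,a)-V^\pi(s)$. *)

theory Defs
  imports "HOL-Analysis.Analysis"
begin

text \<open>The deterministic MDP is given by a transition f, reward r and a set Term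
  of terminal states (episodes stop on reaching Term).\<close>

definition is_policy :: "('s::finite \<Rightarrow> 'a::finite \<Rightarrow> real) \<Rightarrow> bool" where
  "is_policy pol \<longleftrightarrow> (\<forall>s a. 0 \<le> pol s a) \<and> (\<forall>s. (\<Sum>a\<in>UNIV. pol s a) = 1)"

fun value_trunc :: "('s \<Rightarrow> 'a \<Rightarrow> 's) \<Rightarrow> ('s \<Rightarrow> 'a \<Rightarrow> real) \<Rightarrow> 's set
    \<Rightarrow> ('s \<Rightarrow> 'a::finite \<Rightarrow> real) \<Rightarrow> nat \<Rightarrow> 's \<Rightarrow> real" where
  "value_trunc f r Term pol 0 s = 0"
| "value_trunc f r Term pol (Suc n) s =
     (if s \<in> Term then 0
      else (\<Sum>a\<in>UNIV. pol s a * (r s a + value_trunc f r Term pol n (f s a))))"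

definition value_fun :: "('s \<Rightarrow> 'a \<Rightarrow> 's) \<Rightarrow> ('s \<Rightarrow> 'a \<Rightarrow> real) \<Rightarrow> 's set
    \<Rightarrow> ('s \<Rightarrow> 'a::finite \<Rightarrow> real) \<Rightarrow> 's \<Rightarrow> real" where
  "value_fun f r Term pol s = lim (\<lambda>n. value_trunc f r Term pol n s)"

definition Q_fun :: "('s \<Rightarrow> 'a \<Rightarrow> 's) \<Rightarrow> ('s \<Rightarrow> 'a \<Rightarrow> real) \<Rightarrow> 's set
    \<Rightarrow> ('s \<Rightarrow> 'a::finite \<Rightarrow> real) \<Rightarrow> 's \<Rightarrow> 'a \<Rightarrow> real" where
  "Q_fun f r Term pol s a = r s a + value_fun f r Term pol (f s a)"

definition advantage :: "('s \<Rightarrow> 'a \<Rightarrow> 's) \<Rightarrow> ('s \<Rightarrow> 'a \<Rightarrow> real) \<Rightarrow> 's set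
    \<Rightarrow> ('s \<Rightarrow> 'a::finite \<Rightarrow> real) \<Rightarrow> 's \<Rightarrow> 'a \<Rightarrow> real" where
  "advantage f r Term pol s a = Q_fun f r Term pol s a - value_fun f r Term pol s"

definition I_obj :: "real \<Rightarrow> ('s \<Rightarrow> 'a::finite \<Rightarrow> real) \<Rightarrow> ('s \<Rightarrow> 'a \<Rightarrow> real)
    \<Rightarrow> ('s \<Rightarrow> 'a \<Rightarrow> real) \<Rightarrow> 's \<Rightarrow> real" where
  "I_obj \<beta> Adv pol pref s =
     (\<Sum>a\<in>UNIV. pol s a * (Adv s a - \<beta> * ln (pol s a / pref s a)))"

definition H_surr :: "real \<Rightarrow> ('s \<Rightarrow> 'a::finite \<Rightarrow> real) \<Rightarrow> ('s \<Rightarrow> 'a \<Rightarrow> real)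
    \<Rightarrow> ('s \<Rightarrow> 'a \<Rightarrow> real) \<Rightarrow> ('s \<Rightarrow> 'a \<Rightarrow> real) \<Rightarrow> 's \<Rightarrow> real" where
  "H_surr \<beta> Adv pik pol pref s =
     1/2 * (\<Sum>a\<in>UNIV. pik s a * (Adv s a / \<beta> - ln (pol s a / pref s a))\<^sup>2)"

end

theory Submission
  imports Defs
begin

text \<open>Differentiating the expectation in \<open>I_s\<close> produces, besides the score-function terms
  \<open>(A - \<beta> log(\<pi>/\<pi>_ref)) \<nabla>\<pi>\<close>, the extra term \<open>-\<beta> \<Sum>_a \<nabla>\<pi>(a|s)\<close>, which vanishes because
  \<open>\<pi>_\<theta>(\<cdot>|s)\<close> sums to one for every \<open>\<theta>\<close>. Differentiating the squared loss in \<open>H_s^k\<close> gives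
  \<open>\<pi>_k (log(\<pi>/\<pi>_ref) - A/\<beta>) \<nabla>\<pi> / \<pi>\<close>, and at \<open>\<theta> = \<theta>_k\<close> the importance ratio \<open>\<pi>_k/\<pi>\<close> is one.
  The advantage enters both sides only as a fixed weight.\<close>

lemma GDERIV_sum:
  assumes "\<And>a. a \<in> A \<Longrightarrow> GDERIV (f a) x :> G a"
  shows "GDERIV (\<lambda>y. \<Sum>a\<in>A. f a y) x :> (\<Sum>a\<in>A. G a)"
  using assms unfolding gderiv_def inner_sum_right by (rule has_derivative_sum)

lemma GDERIV_unique:
  assumes "GDERIV f x :> G1" and "GDERIV f x :> G2"
  shows "G1 = G2"
proof -
  have "(\<lambda>h. h \<bullet> G1) = (\<lambda>h. h \<bullet> G2)"
    using assms unfolding gderiv_def by (rule has_derivative_unique)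
  then show ?thesis by (metis vector_eq_ldot)
qed

lemma differentiable_imp_GDERIV:
  fixes f :: "'p::euclidean_space \<Rightarrow> real"
  assumes "f differentiable (at x)"
  obtains G where "GDERIV f x :> G"
proof -
  obtain D where D: "(f has_derivative D) (at x)"
    using assms unfolding differentiable_def by blast
  have "D = (\<lambda>h. h \<bullet> adjoint D 1)"
    using has_derivative_linear[OF D] by (simp add: adjoint_works)
  with D have "GDERIV f x :> adjoint D 1"
    unfolding gderiv_def by simp
  then show thesis by (rule that)
qed

lemma GDERIV_ln_div:
  assumes "GDERIV p x :> G" and "p x > 0" and "q > 0"
  shows "GDERIV (\<lambda>y. ln (p y / q)) x :> (1 / p x) *\<^sub>R G"
proof -
  have "DERIV (\<lambda>t. ln (t / q)) (p x) :> 1 / p x"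
    using assms(2,3) by (auto intro!: derivative_eq_intros simp: field_simps)
  from GDERIV_DERIV_compose[OF assms(1) this] show ?thesis .
qed

lemma sum_GDERIV_eq_0_if_sum_const:
  assumes "\<And>y. (\<Sum>a\<in>A. f a y) = c" and "\<And>a. a \<in> A \<Longrightarrow> GDERIV (f a) x :> G a"
  shows "(\<Sum>a\<in>A. G a) = 0"
proof -
  have "GDERIV (\<lambda>y. \<Sum>a\<in>A. f a y) x :> (\<Sum>a\<in>A. G a)"
    using assms(2) by (rule GDERIV_sum)
  then have "GDERIV (\<lambda>y. c) x :> (\<Sum>a\<in>A. G a)"
    using assms(1) by simp
  then show ?thesis
    using GDERIV_const GDERIV_unique by blast
qed

lemma GDERIV_I_obj:
  fixes \<pi> :: "'p::real_inner \<Rightarrow> 's \<Rightarrow> 'a::finite \<Rightarrow> real"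
  assumes grad: "\<And>a. GDERIV (\<lambda>\<theta>. \<pi> \<theta> s a) \<theta>k :> G a"
    and pi_pos: "\<And>a. \<pi> \<theta>k s a > 0" and pref_pos: "\<And>a. pref s a > 0"
  shows "GDERIV (\<lambda>\<theta>. I_obj \<beta> Adv (\<pi> \<theta>) pref s) \<theta>k
    :> (\<Sum>a\<in>UNIV. (Adv s a - \<beta> * ln (\<pi> \<theta>k s a / pref s a) - \<beta>) *\<^sub>R G a)"
  unfolding I_obj_def
proof (rule GDERIV_sum)
  fix a
  have "GDERIV (\<lambda>\<theta>. Adv s a - \<beta> * ln (\<pi> \<theta> s a / pref s a)) \<theta>k
      :> 0 - \<beta> *\<^sub>R ((1 / \<pi> \<theta>k s a) *\<^sub>R G a)"
    using GDERIV_diff[OF GDERIV_const GDERIV_mult[OF GDERIV_const GDERIV_ln_div[OF grad pi_pos pref_pos]]]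
    by simp
  from GDERIV_mult[OF grad[of a] this]
  show "GDERIV (\<lambda>\<theta>. \<pi> \<theta> s a * (Adv s a - \<beta> * ln (\<pi> \<theta> s a / pref s a))) \<theta>k
      :> (Adv s a - \<beta> * ln (\<pi> \<theta>k s a / pref s a) - \<beta>) *\<^sub>R G a"
    using pi_pos[of a] by (elim GDERIV_subst) (simp add: algebra_simps)
qed

lemma GDERIV_H_surr:
  fixes \<pi> :: "'p::real_inner \<Rightarrow> 's \<Rightarrow> 'a::finite \<Rightarrow> real"
  assumes grad: "\<And>a. GDERIV (\<lambda>\<theta>. \<pi> \<theta> s a) \<theta>k :> G a"
    and pi_pos: "\<And>a. \<pi> \<theta>k s a > 0" and pref_pos: "\<And>a. pref s a > 0"
  shows "GDERIV (\<lambda>\<theta>. H_surr \<beta> Adv pik (\<pi> \<theta>) pref s) \<theta>k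
    :> (\<Sum>a\<in>UNIV. (pik s a / \<pi> \<theta>k s a * (ln (\<pi> \<theta>k s a / pref s a) - Adv s a / \<beta>)) *\<^sub>R G a)"
proof -
  define e where "e a = Adv s a / \<beta> - ln (\<pi> \<theta>k s a / pref s a)" for a
  have "GDERIV (\<lambda>\<theta>. \<Sum>a\<in>UNIV. pik s a * (Adv s a / \<beta> - ln (\<pi> \<theta> s a / pref s a))\<^sup>2) \<theta>k
      :> (\<Sum>a\<in>UNIV. (pik s a * (2 * e a)) *\<^sub>R (0 - (1 / \<pi> \<theta>k s a) *\<^sub>R G a))"
  proof (rule GDERIV_sum)
    fix a
    have "GDERIV (\<lambda>\<theta>. Adv s a / \<beta> - ln (\<pi> \<theta> s a / pref s a)) \<theta>k
        :> 0 - (1 / \<pi> \<theta>k s a) *\<^sub>R G a"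
      by (intro GDERIV_diff GDERIV_const GDERIV_ln_div grad pi_pos pref_pos)
    moreover have "DERIV (\<lambda>t. pik s a * t\<^sup>2) (e a) :> pik s a * (2 * e a)"
      by (auto intro!: derivative_eq_intros)
    ultimately show "GDERIV (\<lambda>\<theta>. pik s a * (Adv s a / \<beta> - ln (\<pi> \<theta> s a / pref s a))\<^sup>2) \<theta>k
        :> (pik s a * (2 * e a)) *\<^sub>R (0 - (1 / \<pi> \<theta>k s a) *\<^sub>R G a)"
      unfolding e_def by (rule GDERIV_DERIV_compose)
  qed
  from GDERIV_mult[OF GDERIV_const this, of "1/2"] show ?thesis
    unfolding H_surr_def
    by (elim GDERIV_subst)
      (simp only: scaleR_zero_right add_0_right scaleR_sum_right,
       intro sum.cong refl, simp add: e_def algebra_simps)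
qed

theorem mainTheorem1:
  fixes f :: "'s::finite \<Rightarrow> 'a::finite \<Rightarrow> 's"
    and r :: "'s \<Rightarrow> 'a \<Rightarrow> real"
    and Term :: "'s set"
    and pref :: "'s \<Rightarrow> 'a \<Rightarrow> real"
    and \<pi> :: "'p::euclidean_space \<Rightarrow> 's \<Rightarrow> 'a \<Rightarrow> real"
    and \<beta> :: real
    and s :: 's
    and \<theta>k :: 'p
  assumes pref_policy: "is_policy pref"
    and pref_pos: "\<And>s a. pref s a > 0"
    and beta_pos: "\<beta> > 0"
    and pi_policy: "\<And>\<theta>. is_policy (\<pi> \<theta>)"
    and pi_pos: "\<And>\<theta> s a. \<pi> \<theta> s a > 0"
    and pi_diff: "\<And>\<theta> s a. (\<lambda>\<theta>'. \<pi> \<theta>' s a) differentiable (at \<theta>)"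
  shows "\<exists>gI gH.
     GDERIV (\<lambda>\<theta>. I_obj \<beta> (advantage f r Term pref) (\<pi> \<theta>) pref s) \<theta>k :> gI \<and>
     GDERIV (\<lambda>\<theta>. H_surr \<beta> (advantage f r Term pref) (\<pi> \<theta>k) (\<pi> \<theta>) pref s) \<theta>k :> gH \<and>
     gI = - \<beta> *\<^sub>R gH"
proof -
  define A where "A = advantage f r Term pref"
  define L where "L a = ln (\<pi> \<theta>k s a / pref s a)" for a
  have "\<forall>a. \<exists>G. GDERIV (\<lambda>\<theta>. \<pi> \<theta> s a) \<theta>k :> G"
    using differentiable_imp_GDERIV[OF pi_diff] by blast
  then obtain G where grad: "\<And>a. GDERIV (\<lambda>\<theta>. \<pi> \<theta> s a) \<theta>k :> G a"
    by metis
  have gI: "GDERIV (\<lambda>\<theta>. I_obj \<beta> A (\<pi> \<theta>) pref s) \<theta>k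
      :> (\<Sum>a\<in>UNIV. (A s a - \<beta> * L a - \<beta>) *\<^sub>R G a)"
    using grad pi_pos pref_pos unfolding L_def by (rule GDERIV_I_obj)
  have "GDERIV (\<lambda>\<theta>. H_surr \<beta> A (\<pi> \<theta>k) (\<pi> \<theta>) pref s) \<theta>k
      :> (\<Sum>a\<in>UNIV. (\<pi> \<theta>k s a / \<pi> \<theta>k s a * (L a - A s a / \<beta>)) *\<^sub>R G a)"
    using grad pi_pos pref_pos unfolding L_def by (rule GDERIV_H_surr)
  then have gH: "GDERIV (\<lambda>\<theta>. H_surr \<beta> A (\<pi> \<theta>k) (\<pi> \<theta>) pref s) \<theta>k
      :> (\<Sum>a\<in>UNIV. (L a - A s a / \<beta>) *\<^sub>R G a)"
    using pi_pos[of \<theta>k s] by (simp add: less_imp_neq[symmetric])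
  have "(\<Sum>a\<in>UNIV. G a) = 0"
    using pi_policy grad unfolding is_policy_def
    by (intro sum_GDERIV_eq_0_if_sum_const[where f = "\<lambda>a \<theta>. \<pi> \<theta> s a"]) auto
  then have "(\<Sum>a\<in>UNIV. (A s a - \<beta> * L a - \<beta>) *\<^sub>R G a)
      = (\<Sum>a\<in>UNIV. (A s a - \<beta> * L a) *\<^sub>R G a)"
    by (simp add: scaleR_diff_left sum_subtractf flip: scaleR_sum_right)
  also have "\<dots> = - \<beta> *\<^sub>R (\<Sum>a\<in>UNIV. (L a - A s a / \<beta>) *\<^sub>R G a)"
    unfolding scaleR_sum_right scaleR_scaleR
    using beta_pos by (intro sum.cong refl) (simp add: algebra_simps)
  finally show ?thesis
    using gI gH unfolding A_def by blast
qed

end
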